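(* Let $\kappa>0$ and $0<\gamma\le\pi/2$. Let $S$ be a sessile liquid channel (a $\kappa$-cylindrical surface supported on the horizontal plane $\Pi$) making contact angle $\gamma$, with volume $\mathcal V$. Then every sessile liquid channel resting on $\Pi$ with the same contact angle $\gamma$ and smaller volume can be rigidly translated so that it lies strictly in the interior of the region enclosed by $S$ and $\Pi$.
   Context: For $u_0>0$, $(r(\psi),u(\psi))$, $\psi\in[0,\pi]$, is the solution of $\frac{dr}{d\psi}=\frac{\cos\psi}{\kappa u}$, $\frac{du}{d\psi}=\frac{\sin\psi}{\kappa u}$, $r(0)=0$, $u(0)=u_0$ (profile of a $\kappa$-cylindrical surface parametrized by inclination angle). The channel with parameter $u_0$ and contact angle $\gamma$ has cross-section the planar region bounded by the curve $\{(\pm r(\psi),u(\psi)):0\le\psi\le\gamma\}$ and the segment of the line $u=u(\gamma)$ (the plane $\Pi$) joining its endpoints; its volume per unit length is $\mathcal V=2\big(r(\gamma)u(\gamma)-\frac{\sin\gamma}\kappa\big)$. *)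

theory Defs
  imports "HOL-Analysis.Analysis"
begin

text \<open>(r,u) is the profile of a kappa-cylindrical surface parametrized by the
inclination angle psi in [0,pi], with parameter u0 > 0:
  r' = cos psi / (kappa u),  u' = sin psi / (kappa u),  r(0) = 0, u(0) = u0.\<close>
definition is_profile :: "real \<Rightarrow> real \<Rightarrow> (real \<Rightarrow> real) \<Rightarrow> (real \<Rightarrow> real) \<Rightarrow> bool" where
  "is_profile \<kappa> u0 r u \<longleftrightarrow>
     r 0 = 0 \<and> u 0 = u0 \<and>
     (\<forall>\<psi>\<in>{0..pi}.
        (r has_real_derivative (cos \<psi> / (\<kappa> * u \<psi>))) (at \<psi> within {0..pi}) \<and>
        (u has_real_derivative (sin \<psi> / (\<kappa> * u \<psi>))) (at \<psi> within {0..pi}))"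

text \<open>Cross-section of the channel with contact angle gamma: the planar region bounded
by the curve (+-r(psi), u(psi)), 0 <= psi <= gamma, and the segment of the line
u = u(gamma) joining its endpoints.  For 0 < gamma <= pi/2, u is increasing and r is
nonnegative, so this region is the set of points (x,y) at height y = u(psi) for some
psi in [0,gamma] with |x| <= r(psi).\<close>
definition channel_region :: "(real \<Rightarrow> real) \<Rightarrow> (real \<Rightarrow> real) \<Rightarrow> real \<Rightarrow> (real \<times> real) set" where
  "channel_region r u \<gamma> = {(x, y). \<exists>\<psi>\<in>{0..\<gamma>}. y = u \<psi> \<and> \<bar>x\<bar> \<le> r \<psi>}"

text \<open>Volume per unit length.\<close>
definition channel_volume :: "real \<Rightarrow> (real \<Rightarrow> real) \<Rightarrow> (real \<Rightarrow> real) \<Rightarrow> real \<Rightarrow> real" where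
  "channel_volume \<kappa> r u \<gamma> = 2 * (r \<gamma> * u \<gamma> - sin \<gamma> / \<kappa>)"

end

(*
  Parametrised by height, a profile is governed by its first integral
  u\<^sup>2 = u0\<^sup>2 + 2 (1 - cos \<psi>) / \<kappa>, and the half-width w of the cross-section
  satisfies dw/dy = cot \<psi>.  The volume decreases as u0 grows, so the smaller
  channel has the larger base u0' > u0.  At equal height above the base the
  channel with the larger base is steeper, hence narrower (the widths are ordered
  because cot is decreasing) and also shallower.  Aligning the bases and then
  raising the smaller channel by half the difference of the depths puts it
  strictly inside the larger one, whose width strictly increases with height.
*)
theory Submission
  imports Defs
begin

lemma pos_on_interval_if_no_first_zero:
  fixes f :: "real \<Rightarrow> real"
  assumes cont: "continuous_on {a..b} f" and fa: "0 < f a"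
    and no_first_zero: "\<And>t. a < t \<Longrightarrow> t \<le> b \<Longrightarrow> (\<And>s. a \<le> s \<Longrightarrow> s < t \<Longrightarrow> 0 < f s) \<Longrightarrow> f t \<noteq> 0"
    and t: "a \<le> t" "t \<le> b"
  shows "0 < f t"
proof (rule ccontr)
  define Z where "Z = {a..b} \<inter> f -` {0}"
  have zero_below: "\<exists>z\<in>Z. z \<le> s" if s: "a \<le> s" "s \<le> b" "f s \<le> 0" for s
  proof -
    have "continuous_on {a..s} f" using s by (intro continuous_on_subset[OF cont]) auto
    then obtain z where "a \<le> z" "z \<le> s" "f z = 0"
      using IVT2'[of f s 0 a] s(1,3) fa by fastforce
    then show ?thesis using s unfolding Z_def by auto
  qed
  assume "\<not> 0 < f t"
  then have "Z \<noteq> {}" using zero_below[OF t] by auto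
  moreover have bdd: "bdd_below Z" unfolding Z_def by (rule bdd_belowI[of _ a]) auto
  moreover have "closed Z" unfolding Z_def by (rule continuous_closed_preimage[OF cont]) auto
  ultimately have first: "Inf Z \<in> Z" by (rule closed_contains_Inf)
  have least: "Inf Z \<le> z" if "z \<in> Z" for z by (rule cInf_lower[OF that bdd])
  have "a \<noteq> Inf Z" using first fa unfolding Z_def by auto
  then have "a < Inf Z" using first unfolding Z_def by auto
  moreover have "0 < f s" if s: "a \<le> s" "s < Inf Z" for s
  proof (rule ccontr)
    assume "\<not> 0 < f s"
    moreover have "s \<le> b" using s first unfolding Z_def by auto
    ultimately obtain z where "z \<in> Z" "z \<le> s" using zero_below[of s] s(1) by auto
    then show False using least s(2) by fastforce
  qed
  ultimately have "f (Inf Z) \<noteq> 0" using first unfolding Z_def by (intro no_first_zero) auto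
  then show False using first unfolding Z_def by auto
qed

lemma cot_antimono:
  assumes "0 < s" "s \<le> t" "t < pi"
  shows "cot t \<le> cot s"
proof -
  have "0 < sin s" "0 < sin t" using assms by (auto intro: sin_gt_zero)
  moreover have "0 \<le> sin t * cos s - cos t * sin s"
    unfolding sin_diff[symmetric] using assms by (intro sin_ge_zero) auto
  ultimately show ?thesis by (simp add: cot_def field_simps)
qed

locale kappa_profile =
  fixes \<kappa> u0 :: real and r u :: "real \<Rightarrow> real"
  assumes kappa_pos: "0 < \<kappa>" and base_pos: "0 < u0" and profile: "is_profile \<kappa> u0 r u"
begin

lemma r_0: "r 0 = 0" and u_0: "u 0 = u0"
  using profile by (auto simp: is_profile_def)

lemma r_has_derivative_within:
    "t \<in> {0..pi} \<Longrightarrow> (r has_real_derivative cos t / (\<kappa> * u t)) (at t within {0..pi})"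
  and u_has_derivative_within:
    "t \<in> {0..pi} \<Longrightarrow> (u has_real_derivative sin t / (\<kappa> * u t)) (at t within {0..pi})"
  using profile by (auto simp: is_profile_def)

lemma continuous_on_r: "continuous_on {0..pi} r"
  by (rule DERIV_continuous_on[OF r_has_derivative_within])

lemma continuous_on_u: "continuous_on {0..pi} u"
  by (rule DERIV_continuous_on[OF u_has_derivative_within])

lemma r_has_derivative: "t \<in> {0<..<pi} \<Longrightarrow> (r has_real_derivative cos t / (\<kappa> * u t)) (at t)"
  and u_has_derivative: "t \<in> {0<..<pi} \<Longrightarrow> (u has_real_derivative sin t / (\<kappa> * u t)) (at t)"
  using r_has_derivative_within[of t] u_has_derivative_within[of t] at_within_Icc_at[of 0 t pi]
  by auto

lemma u_sq_while_pos:
  assumes t: "0 < t" "t \<le> pi" and pos: "\<And>s. 0 \<le> s \<Longrightarrow> s < t \<Longrightarrow> 0 < u s"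
  shows "(u t)\<^sup>2 = u0\<^sup>2 + 2 * (1 - cos t) / \<kappa>"
proof -
  define E where "E s = (u s)\<^sup>2 - 2 * (1 - cos s) / \<kappa>" for s
  have "E t = E 0"
  proof (rule DERIV_isconst_end[OF t(1)])
    show "continuous_on {0..t} E" unfolding E_def
      using t kappa_pos by (intro continuous_intros continuous_on_subset[OF continuous_on_u]) auto
    fix s assume s: "0 < s" "s < t"
    then have "0 < u s" by (intro pos) auto
    moreover have "(E has_real_derivative 2 * u s * (sin s / (\<kappa> * u s)) - 2 * sin s / \<kappa>) (at s)"
      unfolding E_def using s t u_has_derivative[of s] kappa_pos by (auto intro!: derivative_eq_intros)
    ultimately show "(E has_real_derivative 0) (at s)" using kappa_pos by simp
  qed
  then show ?thesis by (simp add: E_def u_0)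
qed

lemma u_pos: "t \<in> {0..pi} \<Longrightarrow> 0 < u t"
proof (rule pos_on_interval_if_no_first_zero[OF continuous_on_u])
  show "0 < u 0" by (simp add: u_0 base_pos)
  fix t assume "0 < t" "t \<le> pi" "\<And>s. 0 \<le> s \<Longrightarrow> s < t \<Longrightarrow> 0 < u s"
  then have "(u t)\<^sup>2 = u0\<^sup>2 + 2 * (1 - cos t) / \<kappa>" by (rule u_sq_while_pos)
  moreover have "0 \<le> 2 * (1 - cos t) / \<kappa>" using kappa_pos by simp
  ultimately have "0 < (u t)\<^sup>2" using base_pos by (simp add: add_pos_nonneg)
  then show "u t \<noteq> 0" by auto
qed auto

lemma u_sq: "t \<in> {0..pi} \<Longrightarrow> (u t)\<^sup>2 = u0\<^sup>2 + 2 * (1 - cos t) / \<kappa>"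
  using u_sq_while_pos[of t] u_pos by (cases "t = 0") (auto simp: u_0)

lemma u_mono:
  assumes "0 \<le> s" "s \<le> t" "t \<le> pi"
  shows "u s \<le> u t"
proof (rule power2_le_imp_le)
  have "cos t \<le> cos s" using assms by (intro cos_monotone_0_pi_le) auto
  then show "(u s)\<^sup>2 \<le> (u t)\<^sup>2" using assms u_sq[of s] u_sq[of t] kappa_pos
    by (simp add: divide_right_mono)
  show "0 \<le> u t" using u_pos[of t] assms by simp
qed

lemma base_le_u: "t \<in> {0..pi} \<Longrightarrow> u0 \<le> u t"
  using u_mono[of 0 t] by (simp add: u_0)

lemma r_strict_mono:
  assumes "0 \<le> s" "s < t" "t \<le> pi / 2"
  shows "r s < r t"
proof (rule DERIV_pos_imp_increasing_open[OF assms(2)])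
  fix x assume x: "s < x" "x < t"
  then have "0 < cos x" "0 < u x" using assms by (auto intro!: cos_gt_zero_pi u_pos)
  then show "\<exists>y. (r has_real_derivative y) (at x) \<and> 0 < y"
    using r_has_derivative[of x] x assms kappa_pos by (intro exI[of _ "cos x / (\<kappa> * u x)"]) auto
next
  show "continuous_on {s..t} r" using assms by (intro continuous_on_subset[OF continuous_on_r]) auto
qed

end

text \<open>The angle at which the profile reaches height y, inverting the first integral
  \<open>u\<^sup>2 = u0\<^sup>2 + 2 (1 - cos \<psi>) / \<kappa>\<close>; \<open>profile_width\<close> is the half-width of the
  cross-section at height y.\<close>
definition profile_angle :: "real \<Rightarrow> real \<Rightarrow> real \<Rightarrow> real" where
  "profile_angle \<kappa> u0 y = arccos (1 - \<kappa> * (y\<^sup>2 - u0\<^sup>2) / 2)"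

definition profile_width :: "real \<Rightarrow> real \<Rightarrow> (real \<Rightarrow> real) \<Rightarrow> real \<Rightarrow> real" where
  "profile_width \<kappa> u0 r y = r (profile_angle \<kappa> u0 y)"

context kappa_profile
begin

lemma u_pi_sq: "(u pi)\<^sup>2 = u0\<^sup>2 + 4 / \<kappa>"
  using u_sq[of pi] by simp

lemma angle_arg_bounds:
  assumes "u0 \<le> y" "y \<le> u pi"
  shows "\<bar>1 - \<kappa> * (y\<^sup>2 - u0\<^sup>2) / 2\<bar> \<le> 1"
proof -
  have "u0\<^sup>2 \<le> y\<^sup>2" "y\<^sup>2 \<le> (u pi)\<^sup>2" using assms base_pos by (auto intro!: power_mono)
  then show ?thesis using u_pi_sq kappa_pos by (auto simp: abs_le_iff field_simps)
qed

lemma angle_arg_strict_bounds: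
  assumes "u0 < y" "y < u pi"
  shows "\<bar>1 - \<kappa> * (y\<^sup>2 - u0\<^sup>2) / 2\<bar> < 1"
proof -
  have "u0\<^sup>2 < y\<^sup>2" "y\<^sup>2 < (u pi)\<^sup>2" using assms base_pos by (auto intro!: power_strict_mono)
  then show ?thesis using u_pi_sq kappa_pos by (auto simp: abs_less_iff field_simps)
qed

lemma cos_angle: "u0 \<le> y \<Longrightarrow> y \<le> u pi \<Longrightarrow> cos (profile_angle \<kappa> u0 y) = 1 - \<kappa> * (y\<^sup>2 - u0\<^sup>2) / 2"
  using angle_arg_bounds by (simp add: profile_angle_def abs_le_iff)

lemma angle_range: "u0 \<le> y \<Longrightarrow> y \<le> u pi \<Longrightarrow> profile_angle \<kappa> u0 y \<in> {0..pi}"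
  using angle_arg_bounds by (simp add: profile_angle_def abs_le_iff arccos_lbound arccos_ubound)

lemma angle_range_strict: "u0 < y \<Longrightarrow> y < u pi \<Longrightarrow> profile_angle \<kappa> u0 y \<in> {0<..<pi}"
  using angle_arg_strict_bounds by (simp add: profile_angle_def abs_less_iff arccos_lt_bounded)

lemma u_angle:
  assumes "u0 \<le> y" "y \<le> u pi"
  shows "u (profile_angle \<kappa> u0 y) = y"
proof (rule power2_eq_imp_eq)
  show "(u (profile_angle \<kappa> u0 y))\<^sup>2 = y\<^sup>2"
    using u_sq[OF angle_range[OF assms]] cos_angle[OF assms] kappa_pos by simp
  show "0 \<le> u (profile_angle \<kappa> u0 y)" using u_pos[OF angle_range[OF assms]] by simp
  show "0 \<le> y" using assms base_pos by simp
qed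

lemma angle_u:
  assumes "t \<in> {0..pi}"
  shows "profile_angle \<kappa> u0 (u t) = t"
proof -
  have "1 - \<kappa> * ((u t)\<^sup>2 - u0\<^sup>2) / 2 = cos t" using u_sq[OF assms] kappa_pos by (simp add: field_simps)
  then show ?thesis using assms by (simp add: profile_angle_def arccos_cos)
qed

lemma angle_strict_mono:
  assumes "u0 \<le> y" "y < y'" "y' \<le> u pi"
  shows "profile_angle \<kappa> u0 y < profile_angle \<kappa> u0 y'"
proof -
  have "y\<^sup>2 < y'\<^sup>2" using assms base_pos by (intro power_strict_mono) auto
  then show ?thesis unfolding profile_angle_def using kappa_pos
      angle_arg_bounds[of y] angle_arg_bounds[of y'] assms
    by (intro arccos_less_arccos) (auto simp: abs_le_iff)
qed

lemma angle_le:
  assumes "0 \<le> \<gamma>" "\<gamma> \<le> pi" "u0 \<le> y" "y \<le> u \<gamma>"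
  shows "profile_angle \<kappa> u0 y \<le> \<gamma>"
proof -
  have "u \<gamma> \<le> u pi" using assms by (intro u_mono) auto
  then have "profile_angle \<kappa> u0 y \<le> profile_angle \<kappa> u0 (u \<gamma>)"
    using angle_strict_mono[of y "u \<gamma>"] assms by (cases "y = u \<gamma>") auto
  then show ?thesis using angle_u assms by simp
qed

lemma continuous_on_width: "continuous_on {u0..u pi} (profile_width \<kappa> u0 r)"
proof -
  have "continuous_on {u0..u pi} (profile_angle \<kappa> u0)"
    unfolding profile_angle_def using angle_arg_bounds
    by (intro continuous_on_arccos continuous_intros) (auto simp: abs_le_iff)
  then show ?thesis unfolding profile_width_def
    using angle_range by (intro continuous_on_compose2[OF continuous_on_r]) auto
qed

lemma width_has_derivative:
  assumes "u0 < y" "y < u pi"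
  shows "(profile_width \<kappa> u0 r has_real_derivative cot (profile_angle \<kappa> u0 y)) (at y)"
proof -
  define z where "z = 1 - \<kappa> * (y\<^sup>2 - u0\<^sup>2) / 2"
  define \<psi> where "\<psi> = profile_angle \<kappa> u0 y"
  have z: "-1 < z" "z < 1" using angle_arg_strict_bounds[OF assms] by (auto simp: z_def)
  have \<psi>: "\<psi> \<in> {0<..<pi}" "cos \<psi> = z" "u \<psi> = y" "sin \<psi> = sqrt (1 - z\<^sup>2)"
    using angle_range_strict[OF assms] cos_angle[of y] u_angle[of y] sin_arccos[of z] z assms
    by (auto simp: \<psi>_def z_def profile_angle_def)
  have "((\<lambda>y. arccos (1 - \<kappa> * (y\<^sup>2 - u0\<^sup>2) / 2)) has_real_derivative
      inverse (- sqrt (1 - z\<^sup>2)) * (- (\<kappa> * y))) (at y)"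
    using DERIV_arccos[OF z] unfolding z_def
    by (intro DERIV_chain2[where f = arccos]) (auto intro!: derivative_eq_intros)
  then have "(profile_width \<kappa> u0 r has_real_derivative
      cos \<psi> / (\<kappa> * u \<psi>) * (inverse (- sqrt (1 - z\<^sup>2)) * (- (\<kappa> * y)))) (at y)"
    unfolding profile_width_def profile_angle_def \<psi>_def
    by (intro DERIV_chain2[OF r_has_derivative]) (use \<psi> in \<open>auto simp: \<psi>_def profile_angle_def\<close>)
  moreover have "0 < sin \<psi>" using \<psi>(1) by (simp add: sin_gt_zero)
  then have "cos \<psi> / (\<kappa> * u \<psi>) * (inverse (- sqrt (1 - z\<^sup>2)) * (- (\<kappa> * y))) = cot \<psi>"
    using \<psi> kappa_pos assms base_pos by (simp add: cot_def field_simps)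
  ultimately show ?thesis by (simp add: \<psi>_def)
qed

lemma width_strict_mono:
  assumes "u0 \<le> y" "y < y'" "y' \<le> u (pi / 2)"
  shows "profile_width \<kappa> u0 r y < profile_width \<kappa> u0 r y'"
  unfolding profile_width_def
proof (rule r_strict_mono)
  have "u (pi / 2) \<le> u pi" by (intro u_mono) auto
  then show "0 \<le> profile_angle \<kappa> u0 y" "profile_angle \<kappa> u0 y < profile_angle \<kappa> u0 y'"
    using angle_range[of y] angle_strict_mono[of y y'] assms by auto
  show "profile_angle \<kappa> u0 y' \<le> pi / 2" using angle_le[of "pi / 2" y'] assms by auto
qed

lemma channel_region_eq:
  assumes "0 \<le> \<gamma>" "\<gamma> \<le> pi"
  shows "channel_region r u \<gamma> = {(x, y). u0 \<le> y \<and> y \<le> u \<gamma> \<and> \<bar>x\<bar> \<le> profile_width \<kappa> u0 r y}"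
proof (intro equalityI subsetI)
  fix p assume "p \<in> channel_region r u \<gamma>"
  then obtain x \<psi> where p: "p = (x, u \<psi>)" "0 \<le> \<psi>" "\<psi> \<le> \<gamma>" "\<bar>x\<bar> \<le> r \<psi>"
    by (auto simp: channel_region_def)
  then show "p \<in> {(x, y). u0 \<le> y \<and> y \<le> u \<gamma> \<and> \<bar>x\<bar> \<le> profile_width \<kappa> u0 r y}"
    using assms base_le_u[of \<psi>] u_mono[of \<psi> \<gamma>] angle_u[of \<psi>] by (auto simp: profile_width_def)
next
  fix p assume "p \<in> {(x, y). u0 \<le> y \<and> y \<le> u \<gamma> \<and> \<bar>x\<bar> \<le> profile_width \<kappa> u0 r y}"
  then obtain x y where p: "p = (x, y)" "u0 \<le> y" "y \<le> u \<gamma>" "\<bar>x\<bar> \<le> profile_width \<kappa> u0 r y"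
    by auto
  moreover have "y \<le> u pi" using p u_mono[of \<gamma> pi] assms by auto
  ultimately show "p \<in> channel_region r u \<gamma>"
    unfolding channel_region_def using angle_range[of y] angle_le[of \<gamma> y] u_angle[of y] assms
    by (auto simp: profile_width_def intro!: bexI[of _ "profile_angle \<kappa> u0 y"])
qed

lemma interior_channel_region:
  assumes "0 \<le> \<gamma>" "\<gamma> \<le> pi"
  shows "{(x, y). u0 < y \<and> y < u \<gamma> \<and> \<bar>x\<bar> < profile_width \<kappa> u0 r y}
    \<subseteq> interior (channel_region r u \<gamma>)"
proof (rule interior_maximal)
  show "{(x, y). u0 < y \<and> y < u \<gamma> \<and> \<bar>x\<bar> < profile_width \<kappa> u0 r y} \<subseteq> channel_region r u \<gamma>"
    using channel_region_eq[OF assms] by auto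
  define S where "S = (UNIV :: real set) \<times> {u0<..<u \<gamma>}"
  have "u \<gamma> \<le> u pi" using assms by (intro u_mono) auto
  then have "continuous_on S (\<lambda>p. profile_width \<kappa> u0 r (snd p) - \<bar>fst p\<bar>)"
    unfolding S_def
    by (intro continuous_intros continuous_on_compose2[OF continuous_on_width]) auto
  then have "open (S \<inter> (\<lambda>p. profile_width \<kappa> u0 r (snd p) - \<bar>fst p\<bar>) -` {0<..})"
    by (rule continuous_open_preimage) (auto simp: S_def intro: open_Times)
  moreover have "S \<inter> (\<lambda>p. profile_width \<kappa> u0 r (snd p) - \<bar>fst p\<bar>) -` {0<..}
      = {(x, y). u0 < y \<and> y < u \<gamma> \<and> \<bar>x\<bar> < profile_width \<kappa> u0 r y}"
    unfolding S_def by auto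
  ultimately show "open {(x, y). u0 < y \<and> y < u \<gamma> \<and> \<bar>x\<bar> < profile_width \<kappa> u0 r y}"
    by simp
qed

end

lemma profile_width_antimono_base:
  assumes P: "kappa_profile \<kappa> a r u" and Q: "kappa_profile \<kappa> b rs us"
    and ab: "a \<le> b" and h: "0 \<le> h" "b + h \<le> us pi"
  shows "profile_width \<kappa> b rs (b + h) \<le> profile_width \<kappa> a r (a + h)"
proof -
  interpret P: kappa_profile \<kappa> a r u by (rule P)
  interpret Q: kappa_profile \<kappa> b rs us by (rule Q)
  have gain: "(a + x)\<^sup>2 - a\<^sup>2 \<le> (b + x)\<^sup>2 - b\<^sup>2" if "0 \<le> x" for x
    using ab that by (simp add: power2_eq_square algebra_simps mult_right_mono)
  have P_top: "a + x \<le> u pi" if "0 \<le> x" "b + x \<le> us pi" for x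
  proof (rule power2_le_imp_le)
    have "(b + x)\<^sup>2 \<le> (us pi)\<^sup>2" using that Q.base_pos by (intro power_mono) auto
    then show "(a + x)\<^sup>2 \<le> (u pi)\<^sup>2" using gain[OF that(1)] P.u_pi_sq Q.u_pi_sq by simp
    show "0 \<le> u pi" using P.u_pos[of pi] by simp
  qed
  define D where "D x = profile_width \<kappa> a r (a + x) - profile_width \<kappa> b rs (b + x)" for x
  have "D 0 \<le> D h"
  proof (rule DERIV_nonneg_imp_increasing_open[OF h(1)])
    show "continuous_on {0..h} D" unfolding D_def using h P_top[OF h] P.base_pos Q.base_pos
      by (intro continuous_intros continuous_on_compose2[OF P.continuous_on_width]
          continuous_on_compose2[OF Q.continuous_on_width]) auto
    fix x assume x: "0 < x" "x < h"
    have P_in: "a < a + x" "a + x < u pi" using x h P_top[of h] by auto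
    have Q_in: "b < b + x" "b + x < us pi" using x h by auto
    define \<psi>a \<psi>b where "\<psi>a = profile_angle \<kappa> a (a + x)" and "\<psi>b = profile_angle \<kappa> b (b + x)"
    have "(D has_real_derivative cot \<psi>a - cot \<psi>b) (at x)"
      unfolding D_def \<psi>a_def \<psi>b_def
      using P.width_has_derivative[OF P_in, unfolded add.commute[of a], THEN DERIV_shift[THEN iffD1]]
        Q.width_has_derivative[OF Q_in, unfolded add.commute[of b], THEN DERIV_shift[THEN iffD1]]
      by (intro derivative_intros) (simp_all add: add.commute)
    moreover have "\<psi>a \<le> \<psi>b"
      unfolding \<psi>a_def \<psi>b_def profile_angle_def
      using P.angle_arg_bounds[of "a + x"] Q.angle_arg_bounds[of "b + x"] P_in Q_in
        gain[of x] x P.kappa_pos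
      by (subst arccos_le_mono) auto
    moreover have "0 < \<psi>a" "\<psi>b < pi"
      using P.angle_range_strict[OF P_in] Q.angle_range_strict[OF Q_in] by (auto simp: \<psi>a_def \<psi>b_def)
    ultimately show "\<exists>y. (D has_real_derivative y) (at x) \<and> 0 \<le> y"
      using cot_antimono[of \<psi>a \<psi>b] by auto
  qed
  moreover have "D 0 = 0" by (simp add: D_def profile_width_def profile_angle_def P.r_0 Q.r_0)
  ultimately show ?thesis by (simp add: D_def)
qed


lemma channel_volume_antimono_base:
  assumes P: "kappa_profile \<kappa> a r u" and Q: "kappa_profile \<kappa> b rs us"
    and ab: "a \<le> b" and \<gamma>: "0 \<le> \<gamma>" "\<gamma> \<le> pi / 2"
  shows "channel_volume \<kappa> rs us \<gamma> \<le> channel_volume \<kappa> r u \<gamma>"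
proof -
  interpret P: kappa_profile \<kappa> a r u by (rule P)
  interpret Q: kappa_profile \<kappa> b rs us by (rule Q)
  define F where "F x = r x * u \<gamma> - rs x * us \<gamma>" for x
  have "F 0 \<le> F \<gamma>"
  proof (rule DERIV_nonneg_imp_increasing_open[OF \<gamma>(1)])
    show "continuous_on {0..\<gamma>} F" unfolding F_def using \<gamma>
      by (intro continuous_intros continuous_on_subset[OF P.continuous_on_r]
          continuous_on_subset[OF Q.continuous_on_r]) auto
    fix x assume x: "0 < x" "x < \<gamma>"
    then have x_in: "x \<in> {0<..<pi}" and \<gamma>_in: "\<gamma> \<in> {0..pi}" using \<gamma> by auto
    define B C where "B = 2 * (1 - cos \<gamma>) / \<kappa>" and "C = 2 * (1 - cos x) / \<kappa>"
    have "cos \<gamma> \<le> cos x" using x \<gamma> by (intro cos_monotone_0_pi_le) auto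
    then have "C \<le> B" using P.kappa_pos by (simp add: B_def C_def divide_right_mono)
    moreover have "a\<^sup>2 \<le> b\<^sup>2" using ab P.base_pos by (intro power_mono) auto
    ultimately have "0 \<le> (b\<^sup>2 - a\<^sup>2) * (B - C)" by simp
    have pos: "0 < u \<gamma>" "0 < us x" "0 < u x" using P.u_pos Q.u_pos P.u_pos x_in \<gamma>_in by auto
    have "(us \<gamma> * u x)\<^sup>2 = (b\<^sup>2 + B) * (a\<^sup>2 + C)"
      using Q.u_sq[OF \<gamma>_in] P.u_sq[of x] x_in by (simp add: power_mult_distrib B_def C_def)
    also have "\<dots> \<le> (a\<^sup>2 + B) * (b\<^sup>2 + C)"
      using \<open>0 \<le> (b\<^sup>2 - a\<^sup>2) * (B - C)\<close> by (simp add: algebra_simps)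
    also have "\<dots> = (u \<gamma> * us x)\<^sup>2"
      using P.u_sq[OF \<gamma>_in] Q.u_sq[of x] x_in by (simp add: power_mult_distrib B_def C_def)
    finally have "us \<gamma> * u x \<le> u \<gamma> * us x"
      by (rule power2_le_imp_le) (use pos in simp)
    then have "us \<gamma> / us x \<le> u \<gamma> / u x" using pos by (simp add: divide_simps)
    moreover have "0 \<le> cos x / \<kappa>" using x \<gamma> P.kappa_pos by (simp add: cos_ge_zero)
    ultimately have "cos x / \<kappa> * (us \<gamma> / us x) \<le> cos x / \<kappa> * (u \<gamma> / u x)"
      by (rule mult_left_mono)
    moreover have "(F has_real_derivative
        cos x / \<kappa> * (u \<gamma> / u x) - cos x / \<kappa> * (us \<gamma> / us x)) (at x)"
      unfolding F_def using P.r_has_derivative[OF x_in] Q.r_has_derivative[OF x_in]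
      by (auto intro!: derivative_eq_intros)
    ultimately show "\<exists>y. (F has_real_derivative y) (at x) \<and> 0 \<le> y" by auto
  qed
  then show ?thesis by (simp add: F_def channel_volume_def P.r_0 Q.r_0)
qed

lemma profile_rise_strict_antimono:
  assumes P: "kappa_profile \<kappa> a r u" and Q: "kappa_profile \<kappa> b rs us"
    and ab: "a < b" and \<gamma>: "0 < \<gamma>" "\<gamma> \<le> pi"
  shows "us \<gamma> - b < u \<gamma> - a"
proof -
  interpret P: kappa_profile \<kappa> a r u by (rule P)
  interpret Q: kappa_profile \<kappa> b rs us by (rule Q)
  have \<gamma>_in: "\<gamma> \<in> {0..pi}" using \<gamma> by auto
  define B where "B = 2 * (1 - cos \<gamma>) / \<kappa>"
  have "cos \<gamma> < cos 0" using \<gamma> by (intro cos_monotone_0_pi) auto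
  then have "0 < B" using P.kappa_pos by (simp add: B_def)
  have sq: "(u \<gamma>)\<^sup>2 = a\<^sup>2 + B" "(us \<gamma>)\<^sup>2 = b\<^sup>2 + B"
    using P.u_sq[OF \<gamma>_in] Q.u_sq[OF \<gamma>_in] by (simp_all add: B_def)
  have pos: "0 < u \<gamma>" "0 < us \<gamma>" using P.u_pos Q.u_pos \<gamma>_in by auto
  have "a\<^sup>2 < b\<^sup>2" using ab P.base_pos by (intro power_strict_mono) auto
  then have "(u \<gamma>)\<^sup>2 < (us \<gamma>)\<^sup>2" using sq by simp
  then have "u \<gamma> < us \<gamma>" using pos by (simp add: power_less_imp_less_base)
  have "(u \<gamma> - a) * (u \<gamma> + a) = B" "(us \<gamma> - b) * (us \<gamma> + b) = B"
    using sq by (simp_all add: power2_eq_square algebra_simps)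
  then have "u \<gamma> - a = B / (u \<gamma> + a)" "us \<gamma> - b = B / (us \<gamma> + b)"
    using pos P.base_pos Q.base_pos by (simp_all add: eq_divide_eq)
  moreover have "B / (us \<gamma> + b) < B / (u \<gamma> + a)"
    using \<open>0 < B\<close> \<open>u \<gamma> < us \<gamma>\<close> ab pos P.base_pos by (intro divide_strict_left_mono) auto
  ultimately show ?thesis by simp
qed


lemma channel_fits_inside_if_base_less:
  assumes P: "kappa_profile \<kappa> a r u" and Q: "kappa_profile \<kappa> b rs us"
    and ab: "a < b" and \<gamma>: "0 < \<gamma>" "\<gamma> \<le> pi / 2"
  shows "\<exists>v. (\<lambda>p. p + v) ` channel_region rs us \<gamma> \<subseteq> interior (channel_region r u \<gamma>)"
proof -
  interpret P: kappa_profile \<kappa> a r u by (rule P)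
  interpret Q: kappa_profile \<kappa> b rs us by (rule Q)
  define c where "c = ((u \<gamma> - a) - (us \<gamma> - b)) / 2"
  have "0 < c" using profile_rise_strict_antimono[OF P Q ab] \<gamma> by (simp add: c_def)
  have tops: "u \<gamma> \<le> u (pi / 2)" "us \<gamma> \<le> us pi"
    using P.u_mono[of \<gamma> "pi / 2"] Q.u_mono[of \<gamma> pi] \<gamma> by auto
  show ?thesis
  proof (intro exI[of _ "(0, a - b + c)"] image_subsetI)
    fix p assume "p \<in> channel_region rs us \<gamma>"
    then obtain x y where "p = (x, y)" "b \<le> y" "y \<le> us \<gamma>"
      and "\<bar>x\<bar> \<le> profile_width \<kappa> b rs y"
      using Q.channel_region_eq[of \<gamma>] \<gamma> by auto
    moreover define h where "h = y - b"
    ultimately have p: "p = (x, b + h)" "0 \<le> h" "b + h \<le> us \<gamma>"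
      and x: "\<bar>x\<bar> \<le> profile_width \<kappa> b rs (b + h)"
      by auto
    have "a + h + c < u \<gamma>" using p(3) \<open>0 < c\<close> unfolding c_def by (simp add: field_simps)
    then have height: "a < a + h + c" "a + h + c < u \<gamma>" using p(2) \<open>0 < c\<close> by auto
    have "\<bar>x\<bar> \<le> profile_width \<kappa> b rs (b + h)" by (rule x)
    also have "\<dots> \<le> profile_width \<kappa> a r (a + h)"
      using p tops ab by (intro profile_width_antimono_base[OF P Q]) auto
    also have "\<dots> < profile_width \<kappa> a r (a + h + c)"
      using p(2) height tops \<open>0 < c\<close> by (intro P.width_strict_mono) auto
    finally have "(x, a + h + c) \<in> {(x, y). a < y \<and> y < u \<gamma> \<and> \<bar>x\<bar> < profile_width \<kappa> a r y}"
      using height by simp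
    moreover have "p + (0, a - b + c) = (x, a + h + c)" using p(1) by simp
    ultimately show "p + (0, a - b + c) \<in> interior (channel_region r u \<gamma>)"
      using P.interior_channel_region[of \<gamma>] \<gamma> by auto
  qed
qed

theorem mainTheorem15:
  fixes \<kappa> \<gamma> u0 u0' :: real and r u r' u' :: "real \<Rightarrow> real"
  assumes "\<kappa> > 0" and "0 < \<gamma>" and "\<gamma> \<le> pi / 2"
    and "u0 > 0" and "is_profile \<kappa> u0 r u"
    and "u0' > 0" and "is_profile \<kappa> u0' r' u'"
    and "channel_volume \<kappa> r' u' \<gamma> < channel_volume \<kappa> r u \<gamma>"
  shows "\<exists>v :: real \<times> real. (\<lambda>p. p + v) ` channel_region r' u' \<gamma> \<subseteq> interior (channel_region r u \<gamma>)"
proof -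
  have P: "kappa_profile \<kappa> u0 r u" and Q: "kappa_profile \<kappa> u0' r' u'"
    using assms by (simp_all add: kappa_profile_def)
  have "u0 < u0'"
    using channel_volume_antimono_base[OF Q P, of \<gamma>] assms(2,3,8) by force
  then show ?thesis using channel_fits_inside_if_base_less[OF P Q] assms(2,3) by blast
qed

end
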